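(* Let $k$ be a field of characteristic $0$ and $C$ a finite set. Consider the post-Lie-Rinehart algebra $(k,\mathrm{Lie}(\mathcal{T}_C),[-,-],\curvearrowright)$ (scalars $k$, zero anchor). Its algebra of elementary module endomorphisms $\mathrm{El}_k(\mathrm{Lie}(\mathcal{T}_C))$ equals the subalgebra of $(\mathrm{End}_k(\mathrm{Lie}(\mathcal{T}_C)),\circ)$ generated by $\hat{\mathcal{T}}^0_C$ (trees with a free edge at the root, acting as endomorphisms) together with $\delta(\mathrm{Lie}(\mathcal{T}_C))=\{\delta_x : x\in\mathrm{Lie}(\mathcal{T}_C)\}$, where $\delta_x(\eta)=[x,\eta]$.
   Context: Planar trees: $T_C$ is the set of planar rooted trees with vertices decorated by $C$; for $c\in C$ and an ordered (possibly empty) list $t_1,\dots,t_p\in T_C$, $B_c(t_1\cdots t_p)$ denotes the tree whose root is decorated by $c$ and whose ordered children subtrees are $t_1,\dots,t_p$; $\mathcal{T}_C=\mathrm{span}_k(T_C)$. Left grafting: $t_2\curvearrowright t_1=\sum_{v\in V(t_1)}t_2\curvearrowright_v t_1$, where $t_2\curvearrowright_v t_1$ attaches the root of $t_2$ to the vertex $v$ of $t_1$ as its new leftmost child. $\mathrm{Lie}(\mathcal{T}_C)$ is the free Lie algebra on the vector space $\mathcal{T}_C$, and $\curvearrowright$ is extended by $t_3\curvearrowright[t_2,t_1]=[t_3\curvearrowright t_2,t_1]+[t_2,t_3\curvearrowright t_1]$, $[t_3,t_2]\curvearrowright t_1=\mathrm{Ass}(t_3,t_2,t_1)-\mathrm{Ass}(t_2,t_3,t_1)$,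 $\mathrm{Ass}(a,b,c)=a\curvearrowright(b\curvearrowright c)-(a\curvearrowright b)\curvearrowright c$; this makes $\mathrm{Lie}(\mathcal{T}_C)$ a post-Lie algebra. Extend $\curvearrowright$ to a left action of the universal enveloping algebra $U$ of $(\mathrm{Lie}(\mathcal{T}_C),[-,-])$ (product $\cdot$) by $\mathbf 1\curvearrowright y=y$, $x\curvearrowright(w_1\cdot w_2)=(x\curvearrowright w_1)\cdot w_2+w_1\cdot(x\curvearrowright w_2)$, $(x\cdot w)\curvearrowright y=x\curvearrowright(w\curvearrowright y)-(x\curvearrowright w)\curvearrowright y$ for $x\in\mathrm{Lie}(\mathcal{T}_C)$, $w\in U$; then $B_c(t_1\cdots t_p)=(t_1\cdots t_p)\curvearrowright\bullet_c$. A tree with a free edge at the root is $B_c(t_1\cdots t_{j-1}\times t_j\cdots t_p)$, i.e. a tree with one additional empty input slot $\times$ at a specified position among the root's children; it acts as the endomorphism $x\mapsto (t_1\cdots t_{j-1}\cdot x\cdot t_j\cdots t_p)\curvearrowright\bullet_c$. $\hat{\mathcal{T}}^0_C$ is the span of these. For this post-Lie-Rinehart algebra (with scalars $k$ acting trivially), the connection is $\curvearrowright$, the torsion is $T(x,y)=-[x,y]$, $dX(Z)=Z\curvearrowright X$, $\delta X(Z)=T(Z,X)=[X,Z]$, $(\hat\nabla_X\nu)(Y)=X\curvearrowright\nu(Y)-\nu(X\curvearrowright Y)$, and $\mathrm{El}_k$ is the subalgebra of $\mathrm{End}_k$ generated by all $\hat\nabla_{X_1}\cdots\hat\nabla_{X_m}dY$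 and $\hat\nabla_{X_1}\cdots\hat\nabla_{X_m}\delta Y$, $m\ge0$. *)

theory Defs
  imports Main
begin

text \<open>Node c ts is the tree B_c(t_1 ... t_p) with root decorated by c and
ordered children subtrees ts.\<close>
datatype 'c ptree = Node 'c "'c ptree list"

text \<open>Left grafting of s onto a tree: list of all results, one per vertex
(s becomes the new leftmost child of that vertex).\<close>
fun graft :: "'c ptree \<Rightarrow> 'c ptree \<Rightarrow> 'c ptree list"
and graftL :: "'c ptree \<Rightarrow> 'c ptree list \<Rightarrow> 'c ptree list list" where
  "graft s (Node c ts) = Node c (s # ts) # map (Node c) (graftL s ts)"
| "graftL s [] = []"
| "graftL s (t # ts) = map (\<lambda>t'. t' # ts) (graft s t) @ map (\<lambda>ts'. t # ts') (graftL s ts)"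

text \<open>Elements of U = T(span T_C) are (finitely supported) k-valued functions on
words (ordered forests) of trees; the product is concatenation.\<close>
type_synonym ('c, 'k) U = "'c ptree list \<Rightarrow> 'k"

definition monomial :: "'c ptree list \<Rightarrow> ('c, 'k::field) U" where
  "monomial w = (\<lambda>v. if v = w then 1 else 0)"

definition lin :: "('c ptree list \<Rightarrow> ('c, 'k::field) U) \<Rightarrow> ('c, 'k) U \<Rightarrow> ('c, 'k) U" where
  "lin F f = (\<lambda>v. \<Sum>w | f w \<noteq> 0. f w * F w v)"

definition ofList :: "'c ptree list list \<Rightarrow> ('c, 'k::field) U" where
  "ofList ws = (\<lambda>v. of_nat (count_list ws v))"

definition mult :: "('c, 'k::field) U \<Rightarrow> ('c, 'k) U \<Rightarrow> ('c, 'k) U" where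
  "mult f g = lin (\<lambda>w. lin (\<lambda>w'. monomial (w @ w')) g) f"

definition bracket :: "('c, 'k::field) U \<Rightarrow> ('c, 'k) U \<Rightarrow> ('c, 'k) U" where
  "bracket f g = (\<lambda>v. mult f g v - mult g f v)"

inductive_set LieT :: "('c, 'k::field) U set" where
  gen: "monomial [t] \<in> LieT"
| zero: "(\<lambda>v. 0) \<in> LieT"
| add: "f \<in> LieT \<Longrightarrow> g \<in> LieT \<Longrightarrow> (\<lambda>v. f v + g v) \<in> LieT"
| smult: "f \<in> LieT \<Longrightarrow> (\<lambda>v. a * f v) \<in> LieT"
| brk: "f \<in> LieT \<Longrightarrow> g \<in> LieT \<Longrightarrow> bracket f g \<in> LieT"

text \<open>A tree acting on a word: derivation extending left grafting.\<close>
fun derivL :: "'c ptree \<Rightarrow> 'c ptree list \<Rightarrow> 'c ptree list list" where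
  "derivL s [] = []"
| "derivL s (t # ws) = map (\<lambda>t'. t' # ws) (graft s t) @ map (\<lambda>ws'. t # ws') (derivL s ws)"

definition act1 :: "'c ptree \<Rightarrow> ('c, 'k::field) U \<Rightarrow> ('c, 'k) U" where
  "act1 s y = lin (\<lambda>v. ofList (derivL s v)) y"

text \<open>Action of a word: 1 acts as identity, (x w) acts by
  x \<rhd> (w \<rhd> y) - (x \<rhd> w) \<rhd> y  (recursion on the length of the word).\<close>
primrec actN :: "nat \<Rightarrow> 'c ptree list \<Rightarrow> ('c, 'k::field) U \<Rightarrow> ('c, 'k) U" where
  "actN 0 w y = y"
| "actN (Suc n) w y =
     (case w of [] \<Rightarrow> y
      | x # w' \<Rightarrow> (\<lambda>v. act1 x (actN n w' y) v
                        - lin (\<lambda>u. actN n u y) (ofList (derivL x w')) v))"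

definition act :: "'c ptree list \<Rightarrow> ('c, 'k::field) U \<Rightarrow> ('c, 'k) U" where
  "act w y = actN (length w) w y"

definition actU :: "('c, 'k::field) U \<Rightarrow> ('c, 'k) U \<Rightarrow> ('c, 'k) U" where
  "actU f y = lin (\<lambda>w. act w y) f"

text \<open>Endomorphisms of Lie(T_C) are represented by functions on U that vanish
outside Lie(T_C).\<close>
definition restrictL :: "(('c, 'k::field) U \<Rightarrow> ('c, 'k) U) \<Rightarrow> ('c, 'k) U \<Rightarrow> ('c, 'k) U" where
  "restrictL F = (\<lambda>x. if x \<in> LieT then F x else (\<lambda>v. 0))"

inductive_set genAlg :: "((('c, 'k::field) U \<Rightarrow> ('c, 'k) U)) set \<Rightarrow> (('c, 'k) U \<Rightarrow> ('c, 'k) U) set"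
  for S where
  gen: "F \<in> S \<Longrightarrow> restrictL F \<in> genAlg S"
| one: "restrictL id \<in> genAlg S"
| add: "F \<in> genAlg S \<Longrightarrow> G \<in> genAlg S \<Longrightarrow> restrictL (\<lambda>x v. F x v + G x v) \<in> genAlg S"
| smult: "F \<in> genAlg S \<Longrightarrow> restrictL (\<lambda>x v. a * F x v) \<in> genAlg S"
| comp: "F \<in> genAlg S \<Longrightarrow> G \<in> genAlg S \<Longrightarrow> restrictL (F \<circ> G) \<in> genAlg S"

definition dmap :: "('c, 'k::field) U \<Rightarrow> ('c, 'k) U \<Rightarrow> ('c, 'k) U" where
  "dmap Y = (\<lambda>Z. actU Z Y)"

definition delta :: "('c, 'k::field) U \<Rightarrow> ('c, 'k) U \<Rightarrow> ('c, 'k) U" where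
  "delta Y = (\<lambda>Z. bracket Y Z)"

definition nabla :: "('c, 'k::field) U \<Rightarrow> (('c, 'k) U \<Rightarrow> ('c, 'k) U) \<Rightarrow> ('c, 'k) U \<Rightarrow> ('c, 'k) U" where
  "nabla X \<nu> = (\<lambda>Y v. actU X (\<nu> Y) v - \<nu> (actU X Y) v)"

fun nablas :: "('c, 'k::field) U list \<Rightarrow> (('c, 'k) U \<Rightarrow> ('c, 'k) U) \<Rightarrow> ('c, 'k) U \<Rightarrow> ('c, 'k) U" where
  "nablas [] \<nu> = \<nu>"
| "nablas (X # Xs) \<nu> = nabla X (nablas Xs \<nu>)"

definition El :: "(('c, 'k::field) U \<Rightarrow> ('c, 'k) U) set" where
  "El = genAlg ({nablas Xs (dmap Y) | Xs Y. set Xs \<subseteq> LieT \<and> Y \<in> LieT}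
              \<union> {nablas Xs (delta Y) | Xs Y. set Xs \<subseteq> LieT \<and> Y \<in> LieT})"

text \<open>Tree with a free edge at the root, B_c(ts1 \<times> ts2), as the endomorphism
  x \<mapsto> (ts1 \<cdot> x \<cdot> ts2) \<rhd> \<bullet>_c.\<close>
definition freeEdge :: "'c \<Rightarrow> 'c ptree list \<Rightarrow> 'c ptree list \<Rightarrow> ('c, 'k::field) U \<Rightarrow> ('c, 'k) U" where
  "freeEdge c ts1 ts2 = (\<lambda>x. actU (mult (mult (monomial ts1) x) (monomial ts2)) (monomial [Node c []]))"

definition That0 :: "(('c, 'k::field) U \<Rightarrow> ('c, 'k) U) set" where
  "That0 = {freeEdge c ts1 ts2 | c ts1 ts2. True}"

end

(*
  Write R for the subalgebra generated by the free-edge trees and the maps \<delta>x.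

  R is contained in El: \<delta>x is a generator of El, and a free-edge tree B_c(u \<times> v) is shown
  to be elementary by induction on the number of children of its root.  B_c(\<times>) is d\<bullet>_c;
  B_c(\<times> t v) = B_c(t \<times> v) - B_c(\<times> v) \<circ> \<delta>t moves a child to the left of the free edge;
  and \<nabla>_t B_c(u \<times> v) is B_c(t u \<times> v) plus free-edge trees in which t is grafted into u or v,
  which have fewer root children.

  El is contained in R: for a tree, d(B_c(ts)) x = x \<rhd> (ts \<rhd> \<bullet>_c) splits into the free-edge
  tree B_c(x ts) and terms B_c(pre \<times> rest) \<circ> d(t) for the subtrees t, and d[f,g] is
  \<delta>f \<circ> dg - \<delta>g \<circ> df; so R contains every dY.  Moreover R is closed under every \<nabla>_X,
  since \<nabla>_X is a derivation of composition, \<nabla>_X \<delta>Y = \<delta>(X \<rhd> Y), and \<nabla>_X of a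
  free-edge tree is again a linear combination of free-edge trees.
*)

theory Submission
  imports Defs "HOL-Library.Function_Algebras"
begin

section \<open>Finitely supported functions on words\<close>

definition supp :: "('c, 'k::field) U \<Rightarrow> 'c ptree list set" where
  "supp f = {w. f w \<noteq> 0}"

abbreviation fin_supp :: "('c, 'k::field) U \<Rightarrow> bool" where
  "fin_supp f \<equiv> finite (supp f)"

definition smult :: "'k::field \<Rightarrow> ('c, 'k) U \<Rightarrow> ('c, 'k) U" where
  "smult a f = (\<lambda>v. a * f v)"

lemma smult_apply: "smult a f v = a * f v"
  by (simp add: smult_def)

(* Elements of U are handled as vectors; pointwise evaluation is unfolded only on demand. *)
declare plus_fun_apply [simp del] minus_apply [simp del] zero_fun_apply [simp del]

lemmas pointwise_simps = plus_fun_apply minus_apply zero_fun_apply uminus_apply smult_apply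

lemma fun_diff_eq: "(\<lambda>v. f v - g v) = f - g"
  by (simp add: fun_eq_iff minus_apply)

lemma fun_zero_eq: "(\<lambda>v. 0) = 0"
  by (simp add: fun_eq_iff zero_fun_apply)

lemma smult_add: "smult a (f + g) = smult a f + smult a g"
  by (simp add: fun_eq_iff pointwise_simps algebra_simps)

lemma smult_diff: "smult a (f - g) = smult a f - smult a g"
  by (simp add: fun_eq_iff pointwise_simps algebra_simps)

lemma smult_zero [simp]: "smult a 0 = 0" "smult 0 f = 0"
  by (auto simp: fun_eq_iff pointwise_simps)

lemma smult_smult [simp]: "smult a (smult b f) = smult (a * b) f"
  by (simp add: fun_eq_iff pointwise_simps)

lemma smult_minus_one: "smult (-1) f = - f"
  by (simp add: fun_eq_iff pointwise_simps)

lemma supp_zero [simp]: "supp 0 = {}"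
  by (simp add: supp_def zero_fun_apply)

lemma supp_monomial [simp]: "supp (monomial w :: ('c, 'k::field) U) = {w}"
  by (auto simp: supp_def monomial_def)

lemma fin_supp_add [simp]: "fin_supp f \<Longrightarrow> fin_supp g \<Longrightarrow> fin_supp (f + g)"
  by (rule finite_subset[of _ "supp f \<union> supp g"]) (auto simp: supp_def pointwise_simps)

lemma fin_supp_diff [simp]: "fin_supp f \<Longrightarrow> fin_supp g \<Longrightarrow> fin_supp (f - g)"
  by (rule finite_subset[of _ "supp f \<union> supp g"]) (auto simp: supp_def pointwise_simps)

lemma fin_supp_smult [simp]: "fin_supp f \<Longrightarrow> fin_supp (smult a f)"
  by (rule finite_subset[of _ "supp f"]) (auto simp: supp_def pointwise_simps)

lemma fin_supp_induct [consumes 1, case_names zero step]: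
  assumes "fin_supp f" and "P 0"
    and step: "\<And>g w a. fin_supp g \<Longrightarrow> w \<in> supp f \<Longrightarrow> P g \<Longrightarrow> P (g + smult a (monomial w))"
  shows "P f"
proof -
  have "\<forall>g. supp g \<subseteq> T \<longrightarrow> P g" if "finite T" "T \<subseteq> supp f" for T
    using that
  proof (induction T rule: finite_subset_induct)
    case empty
    then show ?case using \<open>P 0\<close> by (auto simp: supp_def fun_zero_eq[symmetric])
  next
    case (insert w T)
    show ?case
    proof (intro allI impI)
      fix g :: "('a, 'b) U"
      assume g: "supp g \<subseteq> insert w T"
      have split: "g = g(w := 0) + smult (g w) (monomial w)"
        by (simp add: fun_eq_iff pointwise_simps monomial_def)
      have "supp (g(w := 0)) \<subseteq> T"
        using g by (auto simp: supp_def pointwise_simps)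
      then have "P (g(w := 0))" and "fin_supp (g(w := 0))"
        using insert.IH insert.hyps(1) finite_subset by blast+
      then show "P g"
        using step insert.hyps(2) split by metis
    qed
  qed
  then show ?thesis
    using assms(1) by blast
qed

lemma lin_expand:
  assumes "finite S" "supp f \<subseteq> S"
  shows "lin F f v = (\<Sum>w\<in>S. f w * F w v)"
proof -
  have "lin F f v = (\<Sum>w\<in>supp f. f w * F w v)"
    by (simp add: lin_def supp_def)
  also have "\<dots> = (\<Sum>w\<in>S. f w * F w v)"
    by (rule sum.mono_neutral_left) (use assms in \<open>auto simp: supp_def\<close>)
  finally show ?thesis .
qed

lemma lin_add: "fin_supp f \<Longrightarrow> fin_supp g \<Longrightarrow> lin F (f + g) = lin F f + lin F g"
  by (rule ext, simp only: plus_fun_apply,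
      subst (1 2 3) lin_expand[where S = "supp f \<union> supp g"])
     (auto simp: supp_def pointwise_simps algebra_simps sum.distrib)

lemma lin_diff: "fin_supp f \<Longrightarrow> fin_supp g \<Longrightarrow> lin F (f - g) = lin F f - lin F g"
  by (rule ext, simp only: minus_apply,
      subst (1 2 3) lin_expand[where S = "supp f \<union> supp g"])
     (auto simp: supp_def pointwise_simps algebra_simps sum_subtractf)

lemma lin_smult: "fin_supp f \<Longrightarrow> lin F (smult a f) = smult a (lin F f)"
  by (rule ext, simp only: smult_apply, subst (1 2) lin_expand[where S = "supp f"])
     (auto simp: supp_def pointwise_simps algebra_simps sum_distrib_left)

lemma lin_zero [simp]: "lin F 0 = 0"
  by (simp add: lin_def fun_eq_iff pointwise_simps)

lemma lin_monomial [simp]: "lin F (monomial w) = F w"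
  by (rule ext, subst lin_expand[where S = "{w}"]) (simp, simp, simp add: monomial_def)

lemma lin_fun_add: "lin (\<lambda>w. F w + G w) f = lin F f + lin G f"
  by (simp add: lin_def fun_eq_iff pointwise_simps algebra_simps sum.distrib)

lemma lin_fun_diff: "lin (\<lambda>w. F w - G w) f = lin F f - lin G f"
  by (simp add: lin_def fun_eq_iff pointwise_simps algebra_simps sum_subtractf)

lemma lin_fun_smult: "lin (\<lambda>w. smult a (F w)) f = smult a (lin F f)"
  by (simp add: lin_def fun_eq_iff pointwise_simps algebra_simps sum_distrib_left)

lemma lin_fun_zero [simp]: "lin (\<lambda>w. 0) f = 0" "lin 0 f = 0"
  by (simp_all add: lin_def fun_eq_iff pointwise_simps)

lemma lin_cong: "(\<And>w. f w \<noteq> 0 \<Longrightarrow> F w = G w) \<Longrightarrow> lin F f = lin G f"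
  by (simp add: lin_def fun_eq_iff pointwise_simps)

lemma lin_swap: "lin (\<lambda>a. lin (\<lambda>b. K a b) g) f = lin (\<lambda>b. lin (\<lambda>a. K a b) f) g"
  unfolding lin_def fun_eq_iff pointwise_simps sum_distrib_left
  by (subst sum.swap) (simp add: algebra_simps)

lemma fin_supp_lin: "fin_supp f \<Longrightarrow> (\<And>w. f w \<noteq> 0 \<Longrightarrow> fin_supp (F w)) \<Longrightarrow> fin_supp (lin F f)"
proof (rule finite_subset)
  show "supp (lin F f) \<subseteq> (\<Union>w\<in>supp f. supp (F w))"
  proof
    fix v assume "v \<in> supp (lin F f)"
    then have "(\<Sum>w | f w \<noteq> 0. f w * F w v) \<noteq> 0"
      by (simp add: supp_def lin_def)
    then obtain w where "f w * F w v \<noteq> 0"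
      by (meson sum.not_neutral_contains_not_neutral)
    then show "v \<in> (\<Union>w\<in>supp f. supp (F w))"
      by (auto simp: supp_def pointwise_simps)
  qed
qed (auto simp: supp_def pointwise_simps)

lemma lin_lin:
  assumes "fin_supp f" "\<And>w. fin_supp (F w)"
  shows "lin G (lin F f) = lin (\<lambda>w. lin G (F w)) f"
  using assms(1)
proof (induction rule: fin_supp_induct)
  case (step g w a)
  have "fin_supp (lin F g)"
    by (rule fin_supp_lin) (use step assms in auto)
  then show ?case
    using step assms by (simp add: lin_add lin_smult)
qed simp

lemma lin_monomial_id: "fin_supp f \<Longrightarrow> lin monomial f = f"
  by (induction rule: fin_supp_induct) (simp_all add: lin_add lin_smult)

section \<open>The concatenation product\<close>

lemma ofList_Nil [simp]: "ofList [] = 0"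
  by (simp add: ofList_def fun_eq_iff pointwise_simps)

lemma ofList_Cons: "ofList (x # L) = monomial x + ofList L"
  by (simp add: ofList_def fun_eq_iff pointwise_simps monomial_def)

lemma ofList_append: "ofList (L1 @ L2) = ofList L1 + ofList L2"
  by (induction L1) (simp_all add: ofList_Cons)

lemma supp_ofList: "supp (ofList L) \<subseteq> set L"
  unfolding supp_def ofList_def by (auto, metis count_list_0_iff of_nat_0)

lemma fin_supp_ofList [simp]: "fin_supp (ofList L)"
  using finite_subset[OF supp_ofList] by blast

lemma ofList_map: "ofList (map h L) = lin (\<lambda>x. monomial (h x)) (ofList L)"
  by (induction L) (simp_all add: ofList_Cons lin_add)

lemma fin_supp_mult [simp]: "fin_supp f \<Longrightarrow> fin_supp g \<Longrightarrow> fin_supp (mult f g)"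
  unfolding mult_def by (intro fin_supp_lin) auto

lemma mult_add_left: "fin_supp f \<Longrightarrow> fin_supp g \<Longrightarrow> mult (f + g) h = mult f h + mult g h"
  unfolding mult_def by (rule lin_add)

lemma mult_diff_left: "fin_supp f \<Longrightarrow> fin_supp g \<Longrightarrow> mult (f - g) h = mult f h - mult g h"
  unfolding mult_def by (rule lin_diff)

lemma mult_smult_left: "fin_supp f \<Longrightarrow> mult (smult a f) h = smult a (mult f h)"
  unfolding mult_def by (rule lin_smult)

lemma mult_add_right: "fin_supp g \<Longrightarrow> fin_supp h \<Longrightarrow> mult f (g + h) = mult f g + mult f h"
  unfolding mult_def by (simp add: lin_add lin_fun_add)

lemma mult_diff_right: "fin_supp g \<Longrightarrow> fin_supp h \<Longrightarrow> mult f (g - h) = mult f g - mult f h"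
  unfolding mult_def by (simp add: lin_diff lin_fun_diff)

lemma mult_smult_right: "fin_supp g \<Longrightarrow> mult f (smult a g) = smult a (mult f g)"
  unfolding mult_def by (simp add: lin_smult lin_fun_smult)

lemma mult_zero [simp]: "mult 0 h = 0" "mult f 0 = 0"
  unfolding mult_def by (simp_all add: fun_zero_eq)

lemma mult_monomial_left: "mult (monomial u) g = lin (\<lambda>w. monomial (u @ w)) g"
  unfolding mult_def by simp

lemma mult_monomial_right: "mult f (monomial v) = lin (\<lambda>w. monomial (w @ v)) f"
  unfolding mult_def by simp

lemma mult_monomial_monomial [simp]: "mult (monomial u) (monomial v) = monomial (u @ v)"
  unfolding mult_def by simp

lemma mult_one_left [simp]: "fin_supp f \<Longrightarrow> mult (monomial []) f = f"
  by (simp add: mult_monomial_left lin_monomial_id[unfolded eta_contract_eq])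

lemma mult_one_right [simp]: "fin_supp f \<Longrightarrow> mult f (monomial []) = f"
  by (simp add: mult_monomial_right lin_monomial_id)

lemma mult_assoc:
  assumes "fin_supp f" "fin_supp g" "fin_supp h"
  shows "mult (mult f g) h = mult f (mult g h)"
proof -
  have "mult (mult f g) h
      = lin (\<lambda>u. lin (\<lambda>w. monomial (u @ w)) h) (lin (\<lambda>u. lin (\<lambda>v. monomial (u @ v)) g) f)"
    unfolding mult_def ..
  also have "\<dots> = lin (\<lambda>u. lin (\<lambda>v. lin (\<lambda>w. monomial (u @ v @ w)) h) g) f"
    using assms by (simp add: lin_lin fin_supp_lin)
  also have "\<dots> = lin (\<lambda>u. lin (\<lambda>x. monomial (u @ x)) (lin (\<lambda>v. lin (\<lambda>w. monomial (v @ w)) h) g)) f"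
    using assms by (simp add: lin_lin fin_supp_lin)
  also have "\<dots> = mult f (mult g h)"
    unfolding mult_def ..
  finally show ?thesis .
qed

lemma bracket_eq: "bracket f g = mult f g - mult g f"
  unfolding bracket_def by (rule fun_diff_eq)

lemma fin_supp_bracket [simp]: "fin_supp f \<Longrightarrow> fin_supp g \<Longrightarrow> fin_supp (bracket f g)"
  unfolding bracket_eq by simp

lemma bracket_zero [simp]: "bracket 0 g = 0" "bracket f 0 = 0"
  unfolding bracket_eq by simp_all

section \<open>The grafting action\<close>

lemma derivL_append:
  "derivL s (u @ v) = map (\<lambda>x. x @ v) (derivL s u) @ map (\<lambda>x. u @ x) (derivL s v)"
  by (induction u) auto

lemma length_derivL: "x \<in> set (derivL s w) \<Longrightarrow> length x = length w"
  by (induction w arbitrary: x) auto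

lemma graftL_eq_derivL: "graftL s ts = derivL s ts"
  by (induction ts) auto

lemma fin_supp_act1 [simp]: "fin_supp y \<Longrightarrow> fin_supp (act1 t y)"
  unfolding act1_def by (intro fin_supp_lin) auto

lemma act1_add: "fin_supp f \<Longrightarrow> fin_supp g \<Longrightarrow> act1 t (f + g) = act1 t f + act1 t g"
  unfolding act1_def by (rule lin_add)

lemma act1_smult: "fin_supp f \<Longrightarrow> act1 t (smult a f) = smult a (act1 t f)"
  unfolding act1_def by (rule lin_smult)

lemma act1_zero [simp]: "act1 t 0 = 0"
  unfolding act1_def by simp

lemma act1_monomial: "act1 t (monomial w) = ofList (derivL t w)"
  unfolding act1_def by simp

lemma act1_mult:
  assumes "fin_supp f" "fin_supp g"
  shows "act1 t (mult f g) = mult (act1 t f) g + mult f (act1 t g)"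
proof -
  let ?D = "\<lambda>w. ofList (derivL t w) :: ('a, 'b) U"
  have leibniz: "?D (u @ v) = lin (\<lambda>x. monomial (x @ v)) (?D u) + lin (\<lambda>x. monomial (u @ x)) (?D v)"
    for u v by (simp only: derivL_append ofList_append ofList_map)
  have "act1 t (mult f g) = lin ?D (lin (\<lambda>u. lin (\<lambda>v. monomial (u @ v)) g) f)"
    unfolding act1_def mult_def ..
  also have "\<dots> = lin (\<lambda>u. lin ?D (lin (\<lambda>v. monomial (u @ v)) g)) f"
    using assms by (intro lin_lin fin_supp_lin) auto
  also have "\<dots> = lin (\<lambda>u. lin (\<lambda>v. ?D (u @ v)) g) f"
    using assms by (subst lin_lin) auto
  also have "\<dots> = lin (\<lambda>u. lin (\<lambda>v. lin (\<lambda>x. monomial (x @ v)) (?D u)) g) f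
                  + lin (\<lambda>u. lin (\<lambda>v. lin (\<lambda>x. monomial (u @ x)) (?D v)) g) f"
    by (simp only: leibniz lin_fun_add)
  also have "lin (\<lambda>u. lin (\<lambda>v. lin (\<lambda>x. monomial (x @ v)) (?D u)) g) f
           = lin (\<lambda>u. lin (\<lambda>x. lin (\<lambda>v. monomial (x @ v)) g) (?D u)) f"
    by (rule arg_cong[where f = "\<lambda>F. lin F f"], rule ext, rule lin_swap)
  also have "\<dots> = mult (act1 t f) g"
    unfolding act1_def mult_def using assms by (subst lin_lin) auto
  also have "lin (\<lambda>u. lin (\<lambda>v. lin (\<lambda>x. monomial (u @ x)) (?D v)) g) f = mult f (act1 t g)"
    unfolding act1_def mult_def using assms by (subst lin_lin) auto
  finally show ?thesis .
qed

lemma same_length_induct [case_names Nil Cons]: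
  assumes "P []" and "\<And>t w. (\<And>u. length u = length w \<Longrightarrow> P u) \<Longrightarrow> P (t # w)"
  shows "P w"
proof (induction "length w" arbitrary: w rule: less_induct)
  case less
  show ?case
  proof (cases w)
    case (Cons t w')
    then show ?thesis
      using assms(2) less by simp
  qed (use assms(1) in simp)
qed

lemma act_Nil [simp]: "act [] y = y"
  by (simp add: act_def)

lemma length_in_supp_derivL: "ofList (derivL t w) u \<noteq> 0 \<Longrightarrow> length u = length w"
  using supp_ofList[of "derivL t w"] length_derivL by (auto simp: supp_def)

lemma lin_derivL_cong:
  "(\<And>u. length u = length w \<Longrightarrow> F u = G u) \<Longrightarrow>
    lin F (ofList (derivL t w)) = lin G (ofList (derivL t w))"
  by (rule lin_cong) (simp add: length_in_supp_derivL)

lemma act_Cons: "act (t # w) y = act1 t (act w y) - lin (\<lambda>u. act u y) (ofList (derivL t w))"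
proof -
  have "act (t # w) y = act1 t (act w y) - lin (\<lambda>u. actN (length w) u y) (ofList (derivL t w))"
    unfolding act_def by (simp only: length_Cons actN.simps list.case) (rule fun_diff_eq)
  also have "lin (\<lambda>u. actN (length w) u y) (ofList (derivL t w)) = lin (\<lambda>u. act u y) (ofList (derivL t w))"
    by (rule lin_derivL_cong) (simp add: act_def)
  finally show ?thesis .
qed
lemma fin_supp_act [simp]: "fin_supp y \<Longrightarrow> fin_supp (act w y)"
proof (induction w rule: same_length_induct)
  case (Cons t w)
  have "fin_supp (lin (\<lambda>u. act u y) (ofList (derivL t w)))"
    using Cons by (intro fin_supp_lin) (simp_all add: length_in_supp_derivL)
  then show ?case
    using Cons by (simp add: act_Cons)
qed simp

lemma act_add: "fin_supp y1 \<Longrightarrow> fin_supp y2 \<Longrightarrow> act w (y1 + y2) = act w y1 + act w y2"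
proof (induction w rule: same_length_induct)
  case (Cons t w)
  then have "lin (\<lambda>u. act u (y1 + y2)) (ofList (derivL t w))
           = lin (\<lambda>u. act u y1 + act u y2) (ofList (derivL t w))"
    by (intro lin_derivL_cong) simp
  then show ?case
    using Cons by (simp add: act_Cons act1_add lin_fun_add)
qed simp

lemma act_smult: "fin_supp y \<Longrightarrow> act w (smult a y) = smult a (act w y)"
proof (induction w rule: same_length_induct)
  case (Cons t w)
  then have "lin (\<lambda>u. act u (smult a y)) (ofList (derivL t w))
           = lin (\<lambda>u. smult a (act u y)) (ofList (derivL t w))"
    by (intro lin_derivL_cong) simp
  then show ?case
    using Cons by (simp add: act_Cons act1_smult lin_fun_smult smult_diff)
qed simp

lemma act_diff:
  assumes "fin_supp y1" "fin_supp y2"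
  shows "act w (y1 - y2) = act w y1 - act w y2"
proof -
  have "act w (y1 + smult (-1) y2) = act w y1 + smult (-1) (act w y2)"
    by (simp only: act_add act_smult assms fin_supp_smult)
  then show ?thesis
    by (simp only: smult_minus_one diff_conv_add_uminus)
qed

lemma act_zero [simp]: "act w 0 = 0"
  using act_smult[of 0 w 0] by simp

lemma act_leaf: "act ts (monomial [Node c []] :: ('c, 'k::field) U) = monomial [Node c ts]"
proof (induction ts rule: same_length_induct)
  case (Cons t w)
  have "act1 t (monomial [Node c w] :: ('c, 'k) U)
      = monomial [Node c (t # w)] + lin (\<lambda>u. monomial [Node c u]) (ofList (derivL t w))"
    by (simp add: act1_monomial ofList_Cons graftL_eq_derivL ofList_map[symmetric] o_def)
  moreover have "lin (\<lambda>u. act u (monomial [Node c []])) (ofList (derivL t w))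
      = lin (\<lambda>u. monomial [Node c u] :: ('c, 'k) U) (ofList (derivL t w))"
    using Cons by (rule lin_derivL_cong)
  ultimately show ?case
    using Cons by (simp add: act_Cons)
qed simp

lemma fin_supp_actU [simp]: "fin_supp f \<Longrightarrow> fin_supp y \<Longrightarrow> fin_supp (actU f y)"
  unfolding actU_def by (rule fin_supp_lin) auto

lemma actU_add_left: "fin_supp f \<Longrightarrow> fin_supp g \<Longrightarrow> actU (f + g) y = actU f y + actU g y"
  unfolding actU_def by (rule lin_add)

lemma actU_diff_left: "fin_supp f \<Longrightarrow> fin_supp g \<Longrightarrow> actU (f - g) y = actU f y - actU g y"
  unfolding actU_def by (rule lin_diff)

lemma actU_smult_left: "fin_supp f \<Longrightarrow> actU (smult a f) y = smult a (actU f y)"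
  unfolding actU_def by (rule lin_smult)

lemma actU_zero_left [simp]: "actU 0 y = 0"
  unfolding actU_def by simp

lemma actU_add_right: "fin_supp y1 \<Longrightarrow> fin_supp y2 \<Longrightarrow> actU f (y1 + y2) = actU f y1 + actU f y2"
  unfolding actU_def by (simp only: act_add lin_fun_add)

lemma actU_diff_right: "fin_supp y1 \<Longrightarrow> fin_supp y2 \<Longrightarrow> actU f (y1 - y2) = actU f y1 - actU f y2"
  unfolding actU_def by (simp only: act_diff lin_fun_diff)

lemma actU_smult_right: "fin_supp y \<Longrightarrow> actU f (smult a y) = smult a (actU f y)"
  unfolding actU_def by (simp only: act_smult lin_fun_smult)

lemma actU_zero_right [simp]: "actU f 0 = 0"
  unfolding actU_def by simp

lemma actU_monomial: "actU (monomial w) y = act w y"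
  unfolding actU_def by simp

lemma actU_tree: "actU (monomial [t]) y = act1 t y"
  unfolding actU_monomial by (simp add: act_Cons)

lemma actU_mult_tree:
  assumes "fin_supp W" "fin_supp y"
  shows "actU (mult (monomial [t]) W) y = act1 t (actU W y) - actU (act1 t W) y"
proof -
  have "actU (mult (monomial [t]) W) y = lin (\<lambda>w. act (t # w) y) W"
    unfolding actU_def mult_monomial_left using assms by (subst lin_lin) auto
  also have "\<dots> = lin (\<lambda>w. act1 t (act w y)) W - lin (\<lambda>w. actU (ofList (derivL t w)) y) W"
    unfolding act_Cons actU_def by (rule lin_fun_diff)
  also have "lin (\<lambda>w. act1 t (act w y)) W = act1 t (actU W y)"
    unfolding act1_def actU_def using assms by (subst lin_lin) auto
  also have "lin (\<lambda>w. actU (ofList (derivL t w)) y) W = actU (act1 t W) y"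
    unfolding act1_def actU_def using assms by (subst lin_lin) auto
  finally show ?thesis .
qed

section \<open>Lie elements act by derivations\<close>

text \<open>The post-Lie identities of the paper are not built into the action \<open>actU\<close>, which is defined
  word by word; for Lie elements they are derived by induction on this degree, which the action
  preserves.\<close>

inductive LieT_deg :: "nat \<Rightarrow> ('c, 'k::field) U \<Rightarrow> bool" where
  gen: "LieT_deg (Suc 0) (monomial [t])"
| zero: "LieT_deg n 0"
| add: "LieT_deg n f \<Longrightarrow> LieT_deg n g \<Longrightarrow> LieT_deg n (f + g)"
| smult: "LieT_deg n f \<Longrightarrow> LieT_deg n (smult a f)"
| bracket: "LieT_deg m f \<Longrightarrow> LieT_deg n g \<Longrightarrow> LieT_deg (m + n) (bracket f g)"
| mono: "LieT_deg m f \<Longrightarrow> m \<le> n \<Longrightarrow> LieT_deg n f"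

lemma LieT_add: "f \<in> LieT \<Longrightarrow> g \<in> LieT \<Longrightarrow> f + g \<in> LieT"
  unfolding plus_fun_def by (rule LieT.add)

lemma LieT_smult: "f \<in> LieT \<Longrightarrow> smult a f \<in> LieT"
  unfolding smult_def by (rule LieT.smult)

lemma LieT_zero: "0 \<in> LieT"
  unfolding zero_fun_def by (rule LieT.zero)

lemma LieT_diff: "f \<in> LieT \<Longrightarrow> g \<in> LieT \<Longrightarrow> f - g \<in> LieT"
  using LieT_add[OF _ LieT_smult, of f g "-1"] by (simp add: smult_minus_one)

lemma LieT_iff_LieT_deg: "f \<in> LieT \<longleftrightarrow> (\<exists>n. LieT_deg n f)"
proof
  show "f \<in> LieT \<Longrightarrow> \<exists>n. LieT_deg n f"
  proof (induction rule: LieT.induct)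
    case (add f g)
    then obtain m n where "LieT_deg m f" "LieT_deg n g"
      by blast
    then have "LieT_deg (m + n) (f + g)"
      by (meson LieT_deg.add LieT_deg.mono le_add1 le_add2)
    then show ?case
      unfolding plus_fun_def by blast
  next
    case zero
    show ?case
      using LieT_deg.zero unfolding zero_fun_def by blast
  next
    case (smult f a)
    then show ?case
      using LieT_deg.smult unfolding smult_def by blast
  qed (blast intro: LieT_deg.intros)+
  have "LieT_deg n f \<Longrightarrow> f \<in> LieT" for n
    by (induction rule: LieT_deg.induct) (auto intro: LieT.gen LieT.brk LieT_add LieT_smult LieT_zero)
  then show "\<exists>n. LieT_deg n f \<Longrightarrow> f \<in> LieT"
    by blast
qed

lemma LieT_deg_fin_supp: "LieT_deg n f \<Longrightarrow> fin_supp f"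
  by (induction rule: LieT_deg.induct) auto

lemma LieT_fin_supp: "X \<in> LieT \<Longrightarrow> fin_supp X"
  using LieT_iff_LieT_deg LieT_deg_fin_supp by blast

lemma LieT_deg_0: "LieT_deg n f \<Longrightarrow> n = 0 \<Longrightarrow> f = 0"
  by (induction rule: LieT_deg.induct) (auto simp: bracket_eq)

lemma LieT_deg_diff: "LieT_deg n f \<Longrightarrow> LieT_deg n g \<Longrightarrow> LieT_deg n (f - g)"
  using LieT_deg.add[OF _ LieT_deg.smult, of n f g "-1"] by (simp add: smult_minus_one)

lemma LieT_deg_ofList_trees: "LieT_deg (Suc 0) (ofList (map (\<lambda>t. [t]) ts))"
  by (induction ts) (auto simp: ofList_Cons intro: LieT_deg.intros)

definition acts_by_derivation :: "('c, 'k::field) U \<Rightarrow> bool" where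
  "acts_by_derivation X \<longleftrightarrow> (\<forall>f g. fin_supp f \<longrightarrow> fin_supp g \<longrightarrow>
      actU X (mult f g) = mult (actU X f) g + mult f (actU X g))"

definition acts_compatibly :: "('c, 'k::field) U \<Rightarrow> bool" where
  "acts_compatibly X \<longleftrightarrow> (\<forall>W y. fin_supp W \<longrightarrow> fin_supp y \<longrightarrow>
      actU (mult X W) y = actU X (actU W y) - actU (actU X W) y)"

definition post_Lie_elem :: "('c, 'k::field) U \<Rightarrow> bool" where
  "post_Lie_elem X \<longleftrightarrow> fin_supp X \<and> acts_by_derivation X \<and> acts_compatibly X
      \<and> (\<forall>n Y. LieT_deg n Y \<longrightarrow> LieT_deg n (actU X Y))"

lemma post_Lie_elemD:
  assumes "post_Lie_elem X"
  shows "fin_supp X"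
    and "\<And>f g. fin_supp f \<Longrightarrow> fin_supp g \<Longrightarrow> actU X (mult f g) = mult (actU X f) g + mult f (actU X g)"
    and "\<And>W y. fin_supp W \<Longrightarrow> fin_supp y \<Longrightarrow> actU (mult X W) y = actU X (actU W y) - actU (actU X W) y"
    and "\<And>n Y. LieT_deg n Y \<Longrightarrow> LieT_deg n (actU X Y)"
  using assms unfolding post_Lie_elem_def acts_by_derivation_def acts_compatibly_def by blast+

lemma actU_bracket:
  assumes "acts_by_derivation X" "fin_supp f" "fin_supp g"
  shows "actU X (bracket f g) = bracket (actU X f) g + bracket f (actU X g)"
  using assms by (simp add: acts_by_derivation_def bracket_eq actU_diff_right algebra_simps)

lemma post_Lie_elem_tree: "post_Lie_elem (monomial [t] :: ('c, 'k::field) U)"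
proof -
  have deriv: "acts_by_derivation (monomial [t] :: ('c, 'k) U)"
    unfolding acts_by_derivation_def actU_tree by (simp add: act1_mult)
  have "LieT_deg n (act1 t Y)" if "LieT_deg n Y" for n and Y :: "('c, 'k) U"
    using that
  proof (induction rule: LieT_deg.induct)
    case (gen s)
    show ?case
      using LieT_deg_ofList_trees[of "graft t s"] by (simp add: act1_monomial)
  next
    case (bracket m f n g)
    then show ?case
      using actU_bracket[OF deriv, of f g]
      by (simp add: actU_tree LieT_deg_fin_supp LieT_deg.add LieT_deg.bracket)
  qed (auto simp: act1_add act1_smult LieT_deg_fin_supp intro: LieT_deg.intros)
  then show ?thesis
    using deriv by (simp add: post_Lie_elem_def acts_compatibly_def actU_tree actU_mult_tree)
qed

lemma post_Lie_elem_zero: "post_Lie_elem (0 :: ('c, 'k::field) U)"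
  unfolding post_Lie_elem_def acts_by_derivation_def acts_compatibly_def by (simp add: LieT_deg.zero)

lemma post_Lie_elem_add:
  assumes "post_Lie_elem f" "post_Lie_elem g"
  shows "post_Lie_elem (f + g)"
  using post_Lie_elemD[OF assms(1)] post_Lie_elemD[OF assms(2)]
  unfolding post_Lie_elem_def acts_by_derivation_def acts_compatibly_def
  by (simp add: actU_add_left mult_add_left mult_add_right actU_add_right LieT_deg.add algebra_simps)

lemma post_Lie_elem_smult:
  assumes "post_Lie_elem f"
  shows "post_Lie_elem (smult a f)"
  using post_Lie_elemD[OF assms]
  unfolding post_Lie_elem_def acts_by_derivation_def acts_compatibly_def
  by (simp add: actU_smult_left mult_smult_left mult_smult_right actU_smult_right smult_add
      smult_diff LieT_deg.smult)

lemma actU_bracket_left: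
  assumes "post_Lie_elem f" "post_Lie_elem g" "fin_supp y"
  shows "actU (bracket f g) y
      = actU f (actU g y) - actU (actU f g) y - (actU g (actU f y) - actU (actU g f) y)"
  using post_Lie_elemD[OF assms(1)] post_Lie_elemD[OF assms(2)] assms(3)
  by (simp add: bracket_eq actU_diff_left)

lemma post_Lie_elem_bracket:
  assumes f: "post_Lie_elem f" and g: "post_Lie_elem g"
    and fg: "post_Lie_elem (actU f g)" and gf: "post_Lie_elem (actU g f)"
  shows "post_Lie_elem (bracket f g)"
proof -
  note facts = post_Lie_elemD[OF f] post_Lie_elemD[OF g] post_Lie_elemD[OF fg] post_Lie_elemD[OF gf]
  have "acts_by_derivation (bracket f g)"
    unfolding acts_by_derivation_def
    by (simp add: actU_bracket_left[OF f g] facts actU_add_right actU_diff_right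
        mult_add_left mult_diff_left mult_add_right mult_diff_right algebra_simps)
  moreover have "acts_compatibly (bracket f g)"
    unfolding acts_compatibly_def
  proof (intro allI impI)
    fix W y :: "('a, 'b) U"
    assume W: "fin_supp W" and y: "fin_supp y"
    have "actU (mult (bracket f g) W) y = actU (mult f (mult g W)) y - actU (mult g (mult f W)) y"
      unfolding bracket_eq using W by (simp add: facts mult_diff_left actU_diff_left mult_assoc)
    also have "\<dots> = actU (bracket f g) (actU W y) - actU (actU (bracket f g) W) y"
      using W y by (simp add: actU_bracket_left[OF f g] facts actU_add_right actU_diff_right
          actU_add_left actU_diff_left algebra_simps)
    finally show "actU (mult (bracket f g) W) y = actU (bracket f g) (actU W y) - actU (actU (bracket f g) W) y" .
  qed
  ultimately show ?thesis
    unfolding post_Lie_elem_def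
    by (simp add: actU_bracket_left[OF f g] facts LieT_deg_fin_supp LieT_deg_diff)
qed

lemma LieT_deg_post_Lie_elem_step:
  fixes X :: "('c, 'k::field) U"
  assumes less: "\<And>m (Y :: ('c, 'k) U). m < N \<Longrightarrow> LieT_deg m Y \<Longrightarrow> post_Lie_elem Y"
  shows "LieT_deg n X \<Longrightarrow> n \<le> N \<Longrightarrow> post_Lie_elem X"
proof (induction rule: LieT_deg.induct)
  case (bracket m f n g)
  have f: "post_Lie_elem f" and g: "post_Lie_elem g"
    using bracket.IH bracket.prems by simp_all
  show ?case
  proof (cases "m = 0 \<or> n = 0")
    case True
    then have "bracket f g = 0"
      using LieT_deg_0[OF bracket.hyps(1)] LieT_deg_0[OF bracket.hyps(2)] by auto
    then show ?thesis
      by (simp add: post_Lie_elem_zero)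
  next
    case False
    \<comment> \<open>\<open>f \<rhd> g\<close> and \<open>g \<rhd> f\<close> have degrees \<open>n\<close> and \<open>m\<close>, both below that of \<open>[f, g]\<close>\<close>
    then have "m < N" "n < N"
      using bracket.prems by simp_all
    have "post_Lie_elem (actU f g)"
      by (rule less[OF \<open>n < N\<close> post_Lie_elemD(4)[OF f bracket.hyps(2)]])
    moreover have "post_Lie_elem (actU g f)"
      by (rule less[OF \<open>m < N\<close> post_Lie_elemD(4)[OF g bracket.hyps(1)]])
    ultimately show ?thesis
      by (rule post_Lie_elem_bracket[OF f g])
  qed
qed (simp_all add: post_Lie_elem_tree post_Lie_elem_zero post_Lie_elem_add post_Lie_elem_smult)

lemma LieT_deg_post_Lie_elem: "LieT_deg N X \<Longrightarrow> post_Lie_elem X"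
proof (induction N arbitrary: X rule: less_induct)
  case (less N)
  show ?case
    by (rule LieT_deg_post_Lie_elem_step[OF less.IH less.prems order_refl])
qed

lemma LieT_post_Lie_elem: "X \<in> LieT \<Longrightarrow> post_Lie_elem X"
  using LieT_iff_LieT_deg LieT_deg_post_Lie_elem by blast

lemma LieT_actU: "X \<in> LieT \<Longrightarrow> Y \<in> LieT \<Longrightarrow> actU X Y \<in> LieT"
  using LieT_iff_LieT_deg post_Lie_elemD(4)[OF LieT_post_Lie_elem] by blast

lemma LieT_actU_bracket:
  assumes "X \<in> LieT" "f \<in> LieT" "g \<in> LieT"
  shows "actU X (bracket f g) = bracket (actU X f) g + bracket f (actU X g)"
proof (rule actU_bracket)
  show "acts_by_derivation X"
    using LieT_post_Lie_elem[OF assms(1)] by (simp add: post_Lie_elem_def)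
qed (simp_all add: assms LieT_fin_supp)

section \<open>Subalgebras of endomorphisms and the connection\<close>

lemma restrictL_apply: "x \<in> LieT \<Longrightarrow> restrictL F x = F x"
  by (simp add: restrictL_def)

lemma restrictL_cong: "(\<And>x. x \<in> LieT \<Longrightarrow> F x = G x) \<Longrightarrow> restrictL F = restrictL G"
  by (rule ext) (simp add: restrictL_def)

lemma restrictL_restrictL [simp]: "restrictL (restrictL F) = restrictL F"
  by (rule restrictL_cong) (simp add: restrictL_apply)

lemma genAlg_restrictL: "G \<in> genAlg S \<Longrightarrow> restrictL G = G"
  by (induction rule: genAlg.induct) simp_all

lemma genAlg_congI:
  assumes "F \<in> genAlg S" "\<And>x. x \<in> LieT \<Longrightarrow> H x = F x"
  shows "restrictL H \<in> genAlg S"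
proof -
  have "restrictL H = restrictL F"
    by (rule restrictL_cong) (rule assms(2))
  then show ?thesis
    using assms(1) by (simp add: genAlg_restrictL)
qed

lemma genAlg_genI:
  assumes "F \<in> S" "\<And>x. x \<in> LieT \<Longrightarrow> H x = F x"
  shows "restrictL H \<in> genAlg S"
  by (rule genAlg_congI[OF genAlg.gen[OF assms(1)]]) (simp add: assms(2) restrictL_apply)

lemma genAlg_addI:
  assumes "F \<in> genAlg S" "G \<in> genAlg S" "\<And>x. x \<in> LieT \<Longrightarrow> H x = F x + G x"
  shows "restrictL H \<in> genAlg S"
  by (rule genAlg_congI[OF genAlg.add[OF assms(1,2)]]) (simp add: assms(3) restrictL_apply plus_fun_def)

lemma genAlg_smultI:
  assumes "F \<in> genAlg S" "\<And>x. x \<in> LieT \<Longrightarrow> H x = smult a (F x)"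
  shows "restrictL H \<in> genAlg S"
  by (rule genAlg_congI[OF genAlg.smult[OF assms(1)]]) (simp add: assms(2) restrictL_apply smult_def)

lemma genAlg_zeroI:
  assumes "\<And>x. x \<in> LieT \<Longrightarrow> H x = 0"
  shows "restrictL H \<in> genAlg S"
  by (rule genAlg_smultI[OF genAlg.one, where a = 0]) (simp add: assms)

lemma genAlg_diffI:
  assumes F: "F \<in> genAlg S" and G: "G \<in> genAlg S"
    and H: "\<And>x. x \<in> LieT \<Longrightarrow> H x = F x - G x"
  shows "restrictL H \<in> genAlg S"
proof (rule genAlg_addI[OF F])
  show "restrictL (\<lambda>x. smult (-1) (G x)) \<in> genAlg S"
    by (rule genAlg_smultI[OF G]) (rule refl)
  show "H x = F x + restrictL (\<lambda>x. smult (-1) (G x)) x" if "x \<in> LieT" for x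
    using that by (simp add: H restrictL_apply fun_eq_iff pointwise_simps)
qed

lemma genAlg_subset_genAlg:
  assumes "\<And>F. F \<in> S \<Longrightarrow> restrictL F \<in> genAlg T"
  shows "genAlg S \<subseteq> genAlg T"
proof
  fix G assume "G \<in> genAlg S"
  then show "G \<in> genAlg T"
  proof (induction rule: genAlg.induct)
    case (gen F)
    then show ?case by (rule assms)
  qed (simp_all add: genAlg.intros)
qed

lemma genAlg_linear_extension:
  fixes \<Phi> :: "('c, 'k::field) U \<Rightarrow> ('c, 'k) U \<Rightarrow> ('c, 'k) U"
  assumes "fin_supp A"
    and gens: "\<And>w. w \<in> supp A \<Longrightarrow> restrictL (\<Phi> (monomial w)) \<in> genAlg S"
    and at_zero: "\<And>x. \<Phi> 0 x = 0"
    and linear: "\<And>g w a x. fin_supp g \<Longrightarrow> x \<in> LieT \<Longrightarrow>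
      \<Phi> (g + smult a (monomial w)) x = \<Phi> g x + smult a (\<Phi> (monomial w) x)"
  shows "restrictL (\<Phi> A) \<in> genAlg S"
  using assms(1)
proof (induction rule: fin_supp_induct)
  case zero
  show ?case
    by (rule genAlg_zeroI) (rule at_zero)
next
  case (step g w a)
  have "restrictL (\<lambda>x. smult a (restrictL (\<Phi> (monomial w)) x)) \<in> genAlg S"
    by (rule genAlg_smultI[OF gens[OF step.hyps(2)]]) (rule refl)
  then show ?case
    by (rule genAlg_addI[OF step.IH]) (simp add: restrictL_apply linear step.hyps(1))
qed

definition LieT_endo :: "(('c, 'k::field) U \<Rightarrow> ('c, 'k) U) \<Rightarrow> bool" where
  "LieT_endo F \<longleftrightarrow> (\<forall>x\<in>LieT. F x \<in> LieT) \<and> (\<forall>x\<in>LieT. \<forall>y\<in>LieT. F (x + y) = F x + F y)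
      \<and> (\<forall>x\<in>LieT. \<forall>a. F (smult a x) = smult a (F x))"

lemma LieT_endoI:
  assumes "\<And>x. x \<in> LieT \<Longrightarrow> F x \<in> LieT"
    and "\<And>x y. x \<in> LieT \<Longrightarrow> y \<in> LieT \<Longrightarrow> F (x + y) = F x + F y"
    and "\<And>x a. x \<in> LieT \<Longrightarrow> F (smult a x) = smult a (F x)"
  shows "LieT_endo F"
  using assms unfolding LieT_endo_def by blast

lemma LieT_endoD:
  assumes "LieT_endo F"
  shows "\<And>x. x \<in> LieT \<Longrightarrow> F x \<in> LieT"
    and "\<And>x y. x \<in> LieT \<Longrightarrow> y \<in> LieT \<Longrightarrow> F (x + y) = F x + F y"
    and "\<And>x a. x \<in> LieT \<Longrightarrow> F (smult a x) = smult a (F x)"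
  using assms unfolding LieT_endo_def by blast+

lemma LieT_endo_diff:
  assumes "LieT_endo F" "x \<in> LieT" "y \<in> LieT"
  shows "F (x - y) = F x - F y"
proof -
  have "F (x + smult (-1) y) = F x + smult (-1) (F y)"
    by (simp add: LieT_endoD(2)[OF assms(1,2) LieT_smult[OF assms(3)]] LieT_endoD(3)[OF assms(1,3)])
  then show ?thesis
    by (simp only: smult_minus_one diff_conv_add_uminus)
qed

lemma LieT_endo_cong: "LieT_endo F \<Longrightarrow> (\<And>x. x \<in> LieT \<Longrightarrow> G x = F x) \<Longrightarrow> LieT_endo G"
  unfolding LieT_endo_def by (simp add: LieT_add LieT_smult)

lemma genAlg_LieT_endo:
  assumes "\<And>F. F \<in> S \<Longrightarrow> LieT_endo F"
  shows "G \<in> genAlg S \<Longrightarrow> LieT_endo G"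
proof (induction rule: genAlg.induct)
  case (gen F)
  show ?case
    by (rule LieT_endo_cong[OF assms[OF gen]]) (simp add: restrictL_apply)
next
  case one
  show ?case
    by (rule LieT_endo_cong[of id]) (simp_all add: LieT_endo_def restrictL_apply)
next
  case (add F G)
  note F = LieT_endoD[OF add.IH(1)] and G = LieT_endoD[OF add.IH(2)]
  have "LieT_endo (\<lambda>x. F x + G x)"
    by (rule LieT_endoI) (simp_all add: F G LieT_add smult_add algebra_simps)
  then show ?case
    by (rule LieT_endo_cong) (simp add: restrictL_apply plus_fun_def)
next
  case (smult F a)
  note F = LieT_endoD[OF smult.IH]
  have "LieT_endo (\<lambda>x. smult a (F x))"
    by (rule LieT_endoI) (simp_all add: F LieT_smult smult_add mult.commute)
  then show ?case
    by (rule LieT_endo_cong) (simp add: restrictL_apply smult_def)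
next
  case (comp F G)
  note F = LieT_endoD[OF comp.IH(1)] and G = LieT_endoD[OF comp.IH(2)]
  have "LieT_endo (\<lambda>x. F (G x))"
    by (rule LieT_endoI) (simp_all add: F G)
  then show ?case
    by (rule LieT_endo_cong) (simp add: restrictL_apply)
qed

lemma nabla_eq: "nabla X \<nu> Y = actU X (\<nu> Y) - \<nu> (actU X Y)"
  by (simp add: nabla_def fun_eq_iff minus_apply)

lemma nabla_restrictL: "X \<in> LieT \<Longrightarrow> x \<in> LieT \<Longrightarrow> nabla X (restrictL F) x = nabla X F x"
  by (simp add: nabla_eq restrictL_apply LieT_actU)

lemma nabla_id: "X \<in> LieT \<Longrightarrow> nabla X id x = 0"
  by (simp add: nabla_eq)

lemma nabla_add:
  assumes "fin_supp (F x)" "fin_supp (G x)"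
  shows "nabla X (\<lambda>x v. F x v + G x v) x = nabla X F x + nabla X G x"
proof -
  have "(\<lambda>x v. F x v + G x v) = (\<lambda>x. F x + G x)"
    by (simp add: plus_fun_def)
  then show ?thesis
    using assms by (simp add: nabla_eq actU_add_right)
qed

lemma nabla_smult:
  assumes "fin_supp (F x)"
  shows "nabla X (\<lambda>x v. a * F x v) x = smult a (nabla X F x)"
proof -
  have "(\<lambda>x v. a * F x v) = (\<lambda>x. smult a (F x))"
    by (simp add: smult_def)
  then show ?thesis
    using assms by (simp add: nabla_eq actU_smult_right smult_diff)
qed

lemma nabla_comp:
  assumes X: "X \<in> LieT" and F: "LieT_endo F" and G: "LieT_endo G" and x: "x \<in> LieT"
  shows "nabla X (F \<circ> G) x = nabla X F (G x) + F (nabla X G x)"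
proof -
  have "actU X (G x) \<in> LieT" "G (actU X x) \<in> LieT"
    using LieT_endoD(1)[OF G] x X by (simp_all add: LieT_actU)
  then show ?thesis
    by (simp add: nabla_eq LieT_endo_diff[OF F])
qed

lemma genAlg_nabla_closed:
  assumes X: "X \<in> LieT"
    and endo: "\<And>F. F \<in> S \<Longrightarrow> LieT_endo F"
    and gens: "\<And>F. F \<in> S \<Longrightarrow> restrictL (nabla X F) \<in> genAlg S"
  shows "G \<in> genAlg S \<Longrightarrow> restrictL (nabla X G) \<in> genAlg S"
proof (induction rule: genAlg.induct)
  case (gen F)
  show ?case
    by (rule genAlg_congI[OF gens[OF gen]]) (simp add: nabla_restrictL X restrictL_apply)
next
  case one
  show ?case
    by (rule genAlg_zeroI) (simp add: nabla_restrictL X nabla_id[OF X])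
next
  case (add F G)
  have "LieT_endo F" "LieT_endo G"
    using add.hyps genAlg_LieT_endo endo by blast+
  then show ?case
    by (intro genAlg_addI[OF add.IH])
       (simp add: nabla_restrictL X restrictL_apply nabla_add LieT_endoD LieT_fin_supp)
next
  case (smult F a)
  have "LieT_endo F"
    using smult.hyps genAlg_LieT_endo endo by blast
  then show ?case
    by (intro genAlg_smultI[OF smult.IH])
       (simp add: nabla_restrictL X restrictL_apply nabla_smult LieT_endoD LieT_fin_supp)
next
  case (comp F G)
  have "LieT_endo F" "LieT_endo G"
    using comp.hyps genAlg_LieT_endo endo by blast+
  then show ?case
    by (intro genAlg_addI[OF genAlg.comp[OF comp.IH(1) comp.hyps(2)] genAlg.comp[OF comp.hyps(1) comp.IH(2)]])
       (simp add: nabla_restrictL X restrictL_apply nabla_comp LieT_endoD)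
qed

section \<open>Free-edge trees are elementary\<close>

definition El_gens :: "(('c, 'k::field) U \<Rightarrow> ('c, 'k) U) set" where
  "El_gens = {nablas Xs \<nu> | Xs \<nu>. set Xs \<subseteq> LieT \<and> (\<exists>Y\<in>LieT. \<nu> = dmap Y \<or> \<nu> = delta Y)}"

lemma El_eq_genAlg: "El = genAlg El_gens"
  unfolding El_def El_gens_def by (rule arg_cong[where f = genAlg]) blast

lemma LieT_endo_delta:
  assumes "Y \<in> LieT"
  shows "LieT_endo (delta Y)"
proof (rule LieT_endoI)
  show "delta Y x \<in> LieT" if "x \<in> LieT" for x
    using that assms by (simp add: delta_def LieT.brk)
  show "delta Y (x + y) = delta Y x + delta Y y" if "x \<in> LieT" "y \<in> LieT" for x y
    using that assms
    by (simp add: delta_def bracket_eq LieT_fin_supp mult_add_right mult_add_left algebra_simps)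
  show "delta Y (smult a x) = smult a (delta Y x)" if "x \<in> LieT" for x a
    using that assms
    by (simp add: delta_def bracket_eq LieT_fin_supp mult_smult_right mult_smult_left smult_diff)
qed

lemma LieT_endo_dmap: "Y \<in> LieT \<Longrightarrow> LieT_endo (dmap Y)"
  by (rule LieT_endoI) (simp_all add: dmap_def LieT_actU LieT_fin_supp actU_add_left actU_smult_left)

lemma LieT_endo_nabla:
  assumes X: "X \<in> LieT" and \<nu>: "LieT_endo \<nu>"
  shows "LieT_endo (nabla X \<nu>)"
proof (rule LieT_endoI)
  note \<nu>' = LieT_endoD[OF \<nu>]
  show "nabla X \<nu> x \<in> LieT" if "x \<in> LieT" for x
    using that X by (simp add: nabla_eq LieT_diff LieT_actU \<nu>')
  show "nabla X \<nu> (x + y) = nabla X \<nu> x + nabla X \<nu> y" if "x \<in> LieT" "y \<in> LieT" for x y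
    using that X by (simp add: nabla_eq \<nu>' LieT_fin_supp LieT_actU actU_add_right algebra_simps)
  show "nabla X \<nu> (smult a x) = smult a (nabla X \<nu> x)" if "x \<in> LieT" for x a
    using that X by (simp add: nabla_eq \<nu>' LieT_fin_supp LieT_actU actU_smult_right smult_diff)
qed

lemma LieT_endo_nablas: "set Xs \<subseteq> LieT \<Longrightarrow> LieT_endo \<nu> \<Longrightarrow> LieT_endo (nablas Xs \<nu>)"
  by (induction Xs) (simp_all add: LieT_endo_nabla)

lemma El_gens_LieT_endo: "F \<in> El_gens \<Longrightarrow> LieT_endo F"
  unfolding El_gens_def by (auto intro!: LieT_endo_nablas LieT_endo_dmap LieT_endo_delta)

lemma nabla_El_gens:
  assumes "F \<in> El_gens" "X \<in> LieT"
  shows "nabla X F \<in> El_gens"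
proof -
  obtain Xs \<nu> where F: "F = nablas Xs \<nu>" and "set Xs \<subseteq> LieT"
    and "\<exists>Y\<in>LieT. \<nu> = dmap Y \<or> \<nu> = delta Y"
    using assms(1) unfolding El_gens_def by blast
  then have "nablas (X # Xs) \<nu> \<in> El_gens"
    using assms(2) unfolding El_gens_def by (intro CollectI exI[of _ "X # Xs"] exI[of _ \<nu>]) simp
  then show ?thesis
    by (simp add: F)
qed

lemma El_nabla_closed: "X \<in> LieT \<Longrightarrow> G \<in> El \<Longrightarrow> restrictL (nabla X G) \<in> El"
  unfolding El_eq_genAlg
  by (rule genAlg_nabla_closed) (simp_all add: El_gens_LieT_endo nabla_El_gens genAlg.gen)

lemma El_LieT_endo: "G \<in> El \<Longrightarrow> LieT_endo G"
  unfolding El_eq_genAlg by (rule genAlg_LieT_endo[OF El_gens_LieT_endo])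

lemma dmap_in_El: "Y \<in> LieT \<Longrightarrow> restrictL (dmap Y) \<in> El"
  unfolding El_eq_genAlg El_gens_def
  by (rule genAlg.gen, intro CollectI exI[of _ "[]"] exI[of _ "dmap Y"]) auto

lemma delta_in_El: "Y \<in> LieT \<Longrightarrow> restrictL (delta Y) \<in> El"
  unfolding El_eq_genAlg El_gens_def
  by (rule genAlg.gen, intro CollectI exI[of _ "[]"] exI[of _ "delta Y"]) auto

abbreviation leaf :: "'c \<Rightarrow> ('c, 'k::field) U" where
  "leaf c \<equiv> monomial [Node c []]"

text \<open>The free-edge tree \<open>B\<^sub>c(A \<times> B)\<close>, with words replaced by arbitrary elements
  \<open>A\<close>, \<open>B\<close> of \<open>U\<close>.\<close>

definition free_edge_map :: "'c \<Rightarrow> ('c, 'k::field) U \<Rightarrow> ('c, 'k) U \<Rightarrow> ('c, 'k) U \<Rightarrow> ('c, 'k) U" where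
  "free_edge_map c A B x = actU (mult (mult A x) B) (leaf c)"

lemma freeEdge_eq: "freeEdge c u v = free_edge_map c (monomial u) (monomial v)"
  by (simp add: freeEdge_def free_edge_map_def fun_eq_iff)

lemma free_edge_map_add_left:
  "fin_supp A1 \<Longrightarrow> fin_supp A2 \<Longrightarrow> fin_supp B \<Longrightarrow> fin_supp x \<Longrightarrow>
    free_edge_map c (A1 + A2) B x = free_edge_map c A1 B x + free_edge_map c A2 B x"
  by (simp add: free_edge_map_def mult_add_left actU_add_left)

lemma free_edge_map_smult_left:
  "fin_supp A \<Longrightarrow> fin_supp B \<Longrightarrow> fin_supp x \<Longrightarrow>
    free_edge_map c (smult a A) B x = smult a (free_edge_map c A B x)"
  by (simp add: free_edge_map_def mult_smult_left actU_smult_left)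

lemma free_edge_map_add_right:
  "fin_supp A \<Longrightarrow> fin_supp B1 \<Longrightarrow> fin_supp B2 \<Longrightarrow> fin_supp x \<Longrightarrow>
    free_edge_map c A (B1 + B2) x = free_edge_map c A B1 x + free_edge_map c A B2 x"
  by (simp add: free_edge_map_def mult_add_right actU_add_left)

lemma free_edge_map_smult_right:
  "fin_supp A \<Longrightarrow> fin_supp B \<Longrightarrow> fin_supp x \<Longrightarrow>
    free_edge_map c A (smult a B) x = smult a (free_edge_map c A B x)"
  by (simp add: free_edge_map_def mult_smult_right actU_smult_left)

lemma free_edge_map_zero [simp]: "free_edge_map c 0 B x = 0" "free_edge_map c A 0 x = 0"
  by (simp_all add: free_edge_map_def)

lemma free_edge_map_in_genAlg:
  assumes "\<And>u v. u \<in> supp A \<Longrightarrow> v \<in> supp B \<Longrightarrow> restrictL (freeEdge c u v) \<in> genAlg S"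
    and "fin_supp A" "fin_supp B"
  shows "restrictL (free_edge_map c A B) \<in> genAlg S"
proof (rule genAlg_linear_extension[OF assms(2)])
  fix u assume u: "u \<in> supp A"
  show "restrictL (free_edge_map c (monomial u) B) \<in> genAlg S"
    by (rule genAlg_linear_extension[OF assms(3)])
       (simp_all add: assms(1)[OF u, unfolded freeEdge_eq] free_edge_map_add_right free_edge_map_smult_right
         LieT_fin_supp)
qed (simp_all add: free_edge_map_add_left free_edge_map_smult_left LieT_fin_supp assms(3))

lemma nabla_free_edge_map:
  assumes X: "post_Lie_elem X" and "fin_supp A" "fin_supp B" "fin_supp x"
  shows "nabla X (free_edge_map c A B) x
    = free_edge_map c (mult X A) B x + free_edge_map c (actU X A) B x + free_edge_map c A (actU X B) x"
proof -
  note X' = post_Lie_elemD[OF X]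
  let ?W = "mult (mult A x) B"
  have "actU X (actU ?W (leaf c)) = actU (mult X ?W) (leaf c) + actU (actU X ?W) (leaf c)"
    using X'(3)[of ?W "leaf c"] assms by simp
  moreover have "actU X ?W = mult (mult (actU X A) x) B + mult (mult A (actU X x)) B + mult (mult A x) (actU X B)"
    using assms X' by (simp add: mult_add_left)
  moreover have "mult X ?W = mult (mult (mult X A) x) B"
    using assms X' by (simp add: mult_assoc)
  ultimately show ?thesis
    using assms X' by (simp add: nabla_eq free_edge_map_def actU_add_left)
qed

lemma length_in_supp_act1: "u \<in> supp (act1 t (monomial w)) \<Longrightarrow> length u = length w"
  by (simp add: act1_monomial supp_def length_in_supp_derivL)

lemma freeEdge_Cons_eq:
  assumes "fin_supp x"
  shows "freeEdge c (t # u) v x = nabla (monomial [t]) (freeEdge c u v) x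
    - free_edge_map c (act1 t (monomial u)) (monomial v) x
    - free_edge_map c (monomial u) (act1 t (monomial v)) x"
  using nabla_free_edge_map[OF post_Lie_elem_tree _ _ assms, where A = "monomial u" and B = "monomial v"]
  by (simp add: freeEdge_eq actU_tree)

lemma freeEdge_Nil_Cons_eq:
  assumes "fin_supp x"
  shows "freeEdge c [] (t # v) x = freeEdge c [t] v x - freeEdge c [] v (bracket (monomial [t]) x)"
proof -
  have "mult x (monomial (t # v)) = mult (mult x (monomial [t])) (monomial v)"
    using mult_assoc[of x "monomial [t]" "monomial v"] assms by simp
  also have "\<dots> = mult (mult (monomial [t]) x) (monomial v) - mult (bracket (monomial [t]) x) (monomial v)"
    using assms by (simp add: bracket_eq mult_diff_left)
  finally show ?thesis
    using assms by (simp add: freeEdge_def actU_diff_left)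
qed

lemma freeEdge_Nil_Nil_eq: "fin_supp x \<Longrightarrow> freeEdge c [] [] x = dmap (leaf c) x"
  by (simp add: freeEdge_def dmap_def)

lemma freeEdge_Cons_in_El:
  fixes c :: 'c
  assumes IH: "\<And>u v. length u + length v < length (t # u') + length v' \<Longrightarrow>
    restrictL (freeEdge c u v) \<in> (El :: (('c, 'k::field) U \<Rightarrow> ('c, 'k) U) set)"
  shows "restrictL (freeEdge c (t # u') v') \<in> (El :: (('c, 'k) U \<Rightarrow> ('c, 'k) U) set)"
proof -
  have shorter: "restrictL (free_edge_map c A B) \<in> genAlg El_gens"
    if "\<And>u. u \<in> supp A \<Longrightarrow> length u = length u'" "\<And>v. v \<in> supp B \<Longrightarrow> length v = length v'"
      "fin_supp A" "fin_supp B" for A B :: "('c, 'k) U"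
  proof (rule free_edge_map_in_genAlg, goal_cases)
    case (1 u v)
    then have "length u + length v < length (t # u') + length v'"
      using that by simp
    then show ?case
      by (rule IH[unfolded El_eq_genAlg])
  qed (use that in simp_all)
  define N :: "('c, 'k) U \<Rightarrow> ('c, 'k) U"
    where "N = restrictL (nabla (monomial [t]) (restrictL (freeEdge c u' v')))"
  define E1 :: "('c, 'k) U \<Rightarrow> ('c, 'k) U"
    where "E1 = restrictL (free_edge_map c (act1 t (monomial u')) (monomial v'))"
  define E2 :: "('c, 'k) U \<Rightarrow> ('c, 'k) U"
    where "E2 = restrictL (free_edge_map c (monomial u') (act1 t (monomial v')))"
  have "restrictL (freeEdge c u' v') \<in> (El :: (('c, 'k) U \<Rightarrow> _) set)"
    by (rule IH) simp
  then have "N \<in> genAlg El_gens"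
    unfolding N_def El_eq_genAlg[symmetric] by (rule El_nabla_closed[OF LieT.gen])
  moreover have "E1 \<in> genAlg El_gens" "E2 \<in> genAlg El_gens"
    unfolding E1_def E2_def by (rule shorter; simp add: length_in_supp_act1)+
  ultimately have "restrictL (\<lambda>x. N x - E1 x) \<in> genAlg El_gens"
    by (intro genAlg_diffI) simp_all
  then show ?thesis
    unfolding El_eq_genAlg
  proof (rule genAlg_diffI[OF _ \<open>E2 \<in> genAlg El_gens\<close>])
    show "freeEdge c (t # u') v' x = restrictL (\<lambda>x. N x - E1 x) x - E2 x" if "x \<in> LieT" for x
      using that
      by (simp add: N_def E1_def E2_def restrictL_apply nabla_restrictL LieT.gen freeEdge_Cons_eq
          LieT_fin_supp)
  qed
qed

lemma freeEdge_in_El: "restrictL (freeEdge c u v) \<in> (El :: (('c, 'k::field) U \<Rightarrow> ('c, 'k) U) set)"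
proof (induction "length u + length v" arbitrary: u v rule: less_induct)
  case less
  consider (Cons) t u' where "u = t # u'" | (Nil_Nil) "u = []" "v = []"
    | (Nil_Cons) t v' where "u = []" "v = t # v'"
    by (meson list.exhaust)
  then show ?case
  proof cases
    case Cons
    show ?thesis
      unfolding Cons by (rule freeEdge_Cons_in_El, rule less) (simp add: Cons)
  next
    case Nil_Nil
    have "restrictL (dmap (leaf c)) \<in> genAlg (El_gens :: (('c, 'k) U \<Rightarrow> _) set)"
      by (rule dmap_in_El[OF LieT.gen, unfolded El_eq_genAlg])
    then show ?thesis
      unfolding El_eq_genAlg
      by (rule genAlg_congI) (simp add: Nil_Nil restrictL_apply freeEdge_Nil_Nil_eq LieT_fin_supp)
  next
    case Nil_Cons
    have "restrictL (freeEdge c [t] v') \<in> (El :: (('c, 'k) U \<Rightarrow> _) set)"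
      by (rule freeEdge_Cons_in_El, rule less) (simp add: Nil_Cons)
    moreover have "restrictL (freeEdge c [] v') \<in> (El :: (('c, 'k) U \<Rightarrow> _) set)"
      by (rule less) (simp add: Nil_Cons)
    moreover have "restrictL (delta (monomial [t])) \<in> (El :: (('c, 'k) U \<Rightarrow> _) set)"
      by (rule delta_in_El[OF LieT.gen])
    ultimately show ?thesis
      unfolding El_eq_genAlg
      by (rule genAlg_diffI[OF _ genAlg.comp])
         (simp add: Nil_Cons restrictL_apply LieT.brk LieT.gen freeEdge_Nil_Cons_eq LieT_fin_supp
           delta_def)
  qed
qed

section \<open>Elementary endomorphisms from free-edge trees and brackets\<close>

definition free_edge_delta_gens :: "(('c, 'k::field) U \<Rightarrow> ('c, 'k) U) set" where
  "free_edge_delta_gens = That0 \<union> {delta x | x. x \<in> LieT}"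

abbreviation R :: "(('c, 'k::field) U \<Rightarrow> ('c, 'k) U) set" where
  "R \<equiv> genAlg free_edge_delta_gens"

lemma freeEdge_in_R: "restrictL (freeEdge c u v) \<in> R"
  by (rule genAlg.gen) (auto simp: free_edge_delta_gens_def That0_def)

lemma delta_in_R: "x \<in> LieT \<Longrightarrow> restrictL (delta x) \<in> R"
  by (rule genAlg.gen) (auto simp: free_edge_delta_gens_def)

lemma free_edge_map_in_R: "fin_supp A \<Longrightarrow> fin_supp B \<Longrightarrow> restrictL (free_edge_map c A B) \<in> R"
  by (rule free_edge_map_in_genAlg) (simp_all add: freeEdge_in_R)

lemma R_subset_El: "R \<subseteq> El"
  unfolding El_eq_genAlg
proof (rule genAlg_subset_genAlg)
  fix F :: "('a, 'b) U \<Rightarrow> ('a, 'b) U"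
  assume "F \<in> free_edge_delta_gens"
  then show "restrictL F \<in> genAlg El_gens"
    by (auto simp: free_edge_delta_gens_def That0_def freeEdge_in_El[unfolded El_eq_genAlg]
        delta_in_El[unfolded El_eq_genAlg])
qed

lemma LieT_endo_freeEdge: "LieT_endo (freeEdge c u v)"
  by (rule LieT_endo_cong[OF El_LieT_endo[OF freeEdge_in_El]]) (simp add: restrictL_apply)

lemma free_edge_delta_gens_LieT_endo: "F \<in> free_edge_delta_gens \<Longrightarrow> LieT_endo F"
  unfolding free_edge_delta_gens_def That0_def by (auto intro: LieT_endo_freeEdge LieT_endo_delta)

lemma nabla_delta:
  assumes "X \<in> LieT" "Y \<in> LieT" "x \<in> LieT"
  shows "nabla X (delta Y) x = delta (actU X Y) x"
  using LieT_actU_bracket[of X Y x] assms by (simp add: nabla_eq delta_def)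

lemma nabla_free_edge_delta_gens:
  assumes F: "F \<in> free_edge_delta_gens" and X: "X \<in> LieT"
  shows "restrictL (nabla X F) \<in> R"
proof -
  note X' = post_Lie_elemD[OF LieT_post_Lie_elem[OF X]]
  from F consider (free_edge) c u v where "F = freeEdge c u v"
    | (delta) Y where "F = delta Y" "Y \<in> LieT"
    unfolding free_edge_delta_gens_def That0_def by blast
  then show ?thesis
  proof cases
    case free_edge
    let ?A = "mult X (monomial u) + actU X (monomial u)"
    have "restrictL (free_edge_map c ?A (monomial v)) \<in> R"
      "restrictL (free_edge_map c (monomial u) (actU X (monomial v))) \<in> R"
      using X' by (simp_all add: free_edge_map_in_R)
    then show ?thesis
      by (rule genAlg_addI)
         (simp add: free_edge restrictL_apply freeEdge_eq nabla_free_edge_map[OF LieT_post_Lie_elem[OF X]]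
           free_edge_map_add_left X' LieT_fin_supp)
  next
    case delta
    show ?thesis
      using delta X by (intro genAlg_genI[of "delta (actU X Y)"])
        (auto simp: free_edge_delta_gens_def LieT_actU nabla_delta)
  qed
qed

lemma R_nabla_closed: "X \<in> LieT \<Longrightarrow> G \<in> R \<Longrightarrow> restrictL (nabla X G) \<in> R"
  by (rule genAlg_nabla_closed) (simp_all add: free_edge_delta_gens_LieT_endo nabla_free_edge_delta_gens)

lemma R_nablas_closed:
  "set Xs \<subseteq> LieT \<Longrightarrow> restrictL \<nu> \<in> R \<Longrightarrow> restrictL (nablas Xs \<nu>) \<in> R"
proof (induction Xs)
  case (Cons X Xs)
  then have "restrictL (nabla X (restrictL (nablas Xs \<nu>))) \<in> R"
    by (simp add: R_nabla_closed)
  then show ?case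
    using Cons.prems by (elim genAlg_congI) (simp add: nabla_restrictL restrictL_apply)
qed simp

lemma actU_one: "post_Lie_elem X \<Longrightarrow> actU X (monomial []) = 0"
  using post_Lie_elemD(2)[of X "monomial []" "monomial []"] post_Lie_elemD(1)[of X] by simp

text \<open>\<open>B\<^sub>c(pre \<cdot> (x \<rhd> ts))\<close>: the part of \<open>x \<rhd> B\<^sub>c(pre \<cdot> ts)\<close> where \<open>x\<close> is grafted
  into the subtrees \<open>ts\<close>.\<close>

definition graft_children :: "'c \<Rightarrow> 'c ptree list \<Rightarrow> 'c ptree list \<Rightarrow> ('c, 'k::field) U \<Rightarrow> ('c, 'k) U" where
  "graft_children c pre ts x = actU (mult (monomial pre) (actU x (monomial ts))) (leaf c)"

lemma graft_children_Cons:
  assumes "x \<in> LieT"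
  shows "graft_children c pre (t # ts) x
    = freeEdge c pre ts (dmap (monomial [t]) x) + graft_children c (pre @ [t]) ts x"
proof -
  note x' = post_Lie_elemD[OF LieT_post_Lie_elem[OF assms]]
  have "actU x (monomial (t # ts))
      = mult (actU x (monomial [t])) (monomial ts) + mult (monomial [t]) (actU x (monomial ts))"
    using x'(2)[of "monomial [t]" "monomial ts"] by simp
  moreover have "mult (monomial pre) (mult (monomial [t]) (actU x (monomial ts)))
      = mult (monomial (pre @ [t])) (actU x (monomial ts))"
    using mult_assoc[of "monomial pre" "monomial [t]" "actU x (monomial ts)"] x' by simp
  ultimately have "mult (monomial pre) (actU x (monomial (t # ts)))
      = mult (mult (monomial pre) (actU x (monomial [t]))) (monomial ts)
        + mult (monomial (pre @ [t])) (actU x (monomial ts))"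
    using x' by (simp add: mult_add_right mult_assoc)
  then show ?thesis
    using x' by (simp add: graft_children_def freeEdge_def dmap_def actU_add_left)
qed

lemma dmap_LieT: "Y \<in> LieT \<Longrightarrow> x \<in> LieT \<Longrightarrow> dmap Y x \<in> LieT"
  by (simp add: dmap_def LieT_actU)

lemma graft_children_in_R:
  "(\<And>t. t \<in> set ts \<Longrightarrow> restrictL (dmap (monomial [t]) :: ('c, 'k::field) U \<Rightarrow> _) \<in> R) \<Longrightarrow>
    restrictL (graft_children c pre ts :: ('c, 'k) U \<Rightarrow> _) \<in> R"
proof (induction ts arbitrary: pre)
  case Nil
  show ?case
    by (rule genAlg_zeroI) (simp add: graft_children_def actU_one LieT_post_Lie_elem)
next
  case (Cons t ts)
  note dmap_t = Cons.prems[OF list.set_intros(1)]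
  show ?case
    by (rule genAlg_addI[OF genAlg.comp[OF freeEdge_in_R[of c pre ts] dmap_t]
        Cons.IH[OF Cons.prems[OF list.set_intros(2)], of "pre @ [t]"]])
       (auto simp: graft_children_Cons restrictL_apply dmap_LieT LieT.gen)
qed

lemma dmap_Node:
  assumes "x \<in> LieT"
  shows "dmap (monomial [Node c ts]) x = freeEdge c [] ts x + graft_children c [] ts x"
proof -
  note x' = post_Lie_elemD[OF LieT_post_Lie_elem[OF assms]]
  have "dmap (monomial [Node c ts]) x = actU x (actU (monomial ts) (leaf c))"
    by (simp add: dmap_def actU_monomial act_leaf)
  then show ?thesis
    using x'(3)[of "monomial ts" "leaf c"] x' by (simp add: freeEdge_def graft_children_def)
qed

lemma dmap_tree_in_R: "restrictL (dmap (monomial [t])) \<in> R"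
proof (induction t)
  case (Node c ts)
  show ?case
    by (rule genAlg_addI[OF freeEdge_in_R graft_children_in_R[where c = c and pre = "[]" and ts = ts]])
       (simp_all add: Node restrictL_apply dmap_Node)
qed

lemma dmap_add:
  assumes "fin_supp f" "fin_supp g"
  shows "dmap (\<lambda>v. f v + g v) x = dmap f x + dmap g x"
proof -
  have "(\<lambda>v. f v + g v) = f + g"
    by (simp add: plus_fun_def)
  then show ?thesis
    using assms by (simp add: dmap_def actU_add_right)
qed

lemma dmap_smult:
  assumes "fin_supp f"
  shows "dmap (\<lambda>v. a * f v) x = smult a (dmap f x)"
  using assms by (simp add: dmap_def actU_smult_right flip: smult_def)

lemma dmap_bracket:
  assumes "f \<in> LieT" "g \<in> LieT" "x \<in> LieT"
  shows "dmap (bracket f g) x = delta f (dmap g x) - delta g (dmap f x)"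
  using LieT_actU_bracket[OF assms(3,1,2)]
  by (simp add: dmap_def delta_def bracket_eq algebra_simps)

lemma dmap_in_R: "Y \<in> LieT \<Longrightarrow> restrictL (dmap Y) \<in> R"
proof (induction rule: LieT.induct)
  case (gen t)
  show ?case by (rule dmap_tree_in_R)
next
  case zero
  show ?case
    by (rule genAlg_zeroI) (simp add: dmap_def fun_zero_eq zero_fun_apply)
next
  case (add f g)
  then show ?case
    by (intro genAlg_addI[OF add.IH]) (simp add: restrictL_apply dmap_add LieT_fin_supp)
next
  case (smult f a)
  then show ?case
    by (intro genAlg_smultI[OF smult.IH]) (simp add: restrictL_apply dmap_smult LieT_fin_supp)
next
  case (brk f g)
  then show ?case
    by (intro genAlg_diffI[OF genAlg.comp[OF delta_in_R brk.IH(2)] genAlg.comp[OF delta_in_R brk.IH(1)]])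
       (simp_all add: restrictL_apply dmap_bracket dmap_LieT)
qed

lemma El_subset_R: "El \<subseteq> R"
  unfolding El_eq_genAlg
proof (rule genAlg_subset_genAlg)
  fix F :: "('a, 'b) U \<Rightarrow> ('a, 'b) U"
  assume "F \<in> El_gens"
  then obtain Xs \<nu> Y where "F = nablas Xs \<nu>" "set Xs \<subseteq> LieT" "Y \<in> LieT" "\<nu> = dmap Y \<or> \<nu> = delta Y"
    unfolding El_gens_def by blast
  then show "restrictL F \<in> R"
    using R_nablas_closed dmap_in_R delta_in_R by blast
qed

theorem lemma5p4:
  shows "(El :: (('c::finite, 'k::field_char_0) U \<Rightarrow> ('c, 'k) U) set)
           = genAlg (That0 \<union> {delta x | x. x \<in> LieT})"
  using El_subset_R R_subset_El unfolding free_edge_delta_gens_def by blast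

end
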